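(* Let $p$ be an odd prime and $k\ge1$. Then $\mathcal{N}_{p^k}$ is a grounded tree with root $0$ and $p^{k-1}$ vertices, described as follows. (i) The vertices other than $0$ that have an edge to $0$ are exactly the residues $x=y\,p^\ell$ with $\lceil k/2\rceil\le \ell<k$, $1\le y\le p^{k-\ell}$ and $\gcd(y,p)=1$. (ii) For every nonzero $x\in\mathcal{N}_{p^k}$, write $x=\tilde x\,p^\ell$ with $1\le\ell<k$ and $\gcd(\tilde x,p)=1$, and let $\hat x\in\{1,\dots,p-1\}$ be $\tilde x\bmod p$. Then the in-tree of $x$ is isomorphic, as a rooted tree with root $x$, to $\mathcal{T}_p(\hat x,\ell)$. In particular, the subtree hanging off $0$ at the in-neighbour $y\,p^\ell$ from (i) is $\mathcal{T}_p(y \bmod p,\ \ell)$.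
   Context: $\mathcal{G}_{n}$ is the directed graph on $\{0,\dots,n-1\}$ with an edge $x\to x^2\bmod n$ for each $x$. $\mathcal{N}_{p^k}$ is the subgraph of $\mathcal{G}_{p^k}$ induced on the multiples of $p$ (the nilpotent residues). A grounded tree is a finite directed graph with all out-degrees one, a root carrying a loop, which is a tree after deleting the loop and in which every vertex has a directed path to the root. For a non-periodic vertex $x$, the in-tree of $x$ is the subgraph induced on all vertices $y$ with $f^j(y)=x$ for some $j\ge0$, where $f(y)=y^2\bmod p^k$. It is a rooted tree with root $x$ and edges directed toward the root. For $a\in\{1,\dots,p-1\}$ and $\ell\ge1$, the rooted tree $\mathcal{T}_p(a,\ell)$ (edges directed toward the root) is defined recursively on $\ell$: (1) if $\ell$ is odd, $\mathcal{T}_p(a,\ell)$ is a single vertex; (2) if $\ell$ is even and $a$ is not a square mod $p$, $\mathcal{T}_p(a,\ell)$ is a single vertex; (3) if $\ell$ is even and $a\equiv z_1^2\equiv z_2^2\pmod p$ with $z_1\neq z_2$ in $\{1,\dots,p-1\}$, then $\mathcal{T}_p(a,\ell)$ is a root with exactly $2p^{\ell/2}$ children. The subtrees rooted at $p^{\ell/2}$ of these children are copies of $\mathcal{T}_p(z_1,\ell/2)$, and the subtrees rooted at the other $p^{\ell/2}$ children are copies of $\mathcal{T}_p(z_2,\ell/2)$. *)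

theory Defs
  imports Main "HOL-Library.Multiset" "HOL-Number_Theory.Number_Theory"
begin

text \<open>Unordered rooted trees: a node together with the multiset of its child subtrees.
  Equality of such values is exactly isomorphism of rooted trees.\<close>
datatype rtree = Node "rtree multiset"

definition sqmap :: "nat \<Rightarrow> nat \<Rightarrow> nat" where
  "sqmap n x = x^2 mod n"

definition nil_verts :: "nat \<Rightarrow> nat \<Rightarrow> nat set" where
  "nil_verts p k = {x. x < p^k \<and> p dvd x}"

text \<open>Grounded tree, for a graph with vertex set V whose edges are x \<rightarrow> f x (out-degree one):
  finite, root r carries a loop, every vertex has a directed path to r, and the graph
  minus the loop is a tree (for a functional graph: no directed cycle other than the loop at r).\<close>
definition grounded_tree :: "'a set \<Rightarrow> ('a \<Rightarrow> 'a) \<Rightarrow> 'a \<Rightarrow> bool" where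
  "grounded_tree V f r \<longleftrightarrow> finite V \<and> r \<in> V \<and> (\<forall>x\<in>V. f x \<in> V) \<and> f r = r \<and>
     (\<forall>x\<in>V. \<exists>j. (f ^^ j) x = r) \<and>
     (\<forall>x\<in>V. \<forall>j>0. (f ^^ j) x = x \<longrightarrow> x = r)"

text \<open>in_tree_shape V f x t: the in-tree of x in the functional graph (V, f)
  (edges towards the root x) is isomorphic, as a rooted tree with root x, to t.\<close>
inductive in_tree_shape :: "'a set \<Rightarrow> ('a \<Rightarrow> 'a) \<Rightarrow> 'a \<Rightarrow> rtree \<Rightarrow> bool"
  for V f where
  "finite {y\<in>V. f y = x} \<Longrightarrow>
   (\<forall>y\<in>{y\<in>V. f y = x}. in_tree_shape V f y (g y)) \<Longrightarrow>
   in_tree_shape V f x (Node (image_mset g (mset_set {y\<in>V. f y = x})))"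

function Tp :: "nat \<Rightarrow> nat \<Rightarrow> nat \<Rightarrow> rtree" where
  "Tp p a l =
    (if l = 0 \<or> odd l \<or> \<not> (\<exists>z\<in>{1..p-1}. [z^2 = a] (mod p)) then Node {#}
     else Node (\<Sum>z\<in>{z\<in>{1..p-1}. [z^2 = a] (mod p)}. replicate_mset (p^(l div 2)) (Tp p z (l div 2))))"
  by pat_completeness auto
termination
  by (relation "measure (\<lambda>(p,a,l). l)") auto

end

theory Submission
  imports Defs
begin

text \<open>Hensel lifting: for an odd prime p and a unit a, the square roots of a modulo p^e that
  reduce to a fixed square root z of a modulo p form a single residue class modulo p^e.
  Let x = a p^l with a a unit and 1 \<le> l < k. A square root y of x modulo p^k exists only if l is
  even, and then y = w p^(l/2) with w < p^(k - l/2) and w^2 \<equiv> a (mod p^(k-l)); by the lifting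
  statement exactly p^(l/2) of these w reduce to each square root z of a modulo p. Every child
  w p^(l/2) is again a unit times a power of p, with unit part congruent to z, which is the
  recursion defining T_p(a, l); induction on l identifies the in-trees. Squaring a multiple of p
  k times gives 0, so the graph is a grounded tree with root 0.\<close>

lemma square_root_lift_unique:
  fixes p z r s :: int
  assumes "prime p" "odd p" "coprime z p"
    and "[r = z] (mod p)" "[s = z] (mod p)" "[r^2 = s^2] (mod p^n)"
  shows "[r = s] (mod p^n)"
proof -
  have "[r + s = 2 * z] (mod p)" using cong_add[OF assms(4,5)] by simp
  moreover have "coprime (2 * z) p" using assms(2,3) by simp
  ultimately have "coprime (r + s) p" by (metis cong_imp_coprime cong_sym)
  then have "coprime (r + s) (p^n)" by simp
  moreover have "p^n dvd (r + s) * (r - s)"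
    using assms(6) by (simp add: cong_iff_dvd_diff power2_eq_square algebra_simps)
  ultimately have "p^n dvd r - s" by (metis coprime_commute coprime_dvd_mult_right_iff)
  then show ?thesis by (simp add: cong_iff_dvd_diff)
qed

lemma square_root_lift_exists:
  fixes p a z :: int
  assumes "prime p" "odd p" "coprime z p" "[z^2 = a] (mod p)" "n \<ge> 1"
  shows "\<exists>r. [r = z] (mod p) \<and> [r^2 = a] (mod p^n)"
  using assms(5)
proof (induction n rule: dec_induct)
  case base
  then show ?case using assms(4) by (intro exI[of _ z]) simp
next
  case (step n)
  then obtain r where rz: "[r = z] (mod p)" and ra: "[r^2 = a] (mod p^n)" by blast
  obtain t where t: "r^2 - a = p^n * t" using ra by (metis cong_iff_dvd_diff cong_sym dvd_def)
  have "coprime r p" using rz assms(3) by (metis cong_imp_coprime cong_sym)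
  then have "coprime (2 * r) p" using assms(2) by simp
  then obtain u where u: "[2 * r * u = 1] (mod p)" using cong_solve_coprime_int by blast
  \<comment> \<open>Newton step: as \<open>2 r u \<equiv> 1 (mod p)\<close>, subtracting \<open>t u p^n\<close> cancels the error \<open>p^n t\<close> modulo \<open>p^(n+1)\<close>.\<close>
  define r' where "r' = r - t * u * p^n"
  have newton: "(r - t * u * q)^2 - a = q * (t * (1 - 2 * r * u)) + (t * u)^2 * (q * q)"
    if "r^2 - a = q * t" for q
  proof -
    have "a = r^2 - q * t" using that by simp
    then show ?thesis by (simp add: power2_eq_square algebra_simps)
  qed
  have square: "p^(2 * n) = p^n * p^n" by (simp add: mult_2 power_add)
  have "r'^2 - a = p^n * (t * (1 - 2 * r * u)) + (t * u)^2 * p^(2 * n)"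
    unfolding r'_def square by (rule newton[OF t])
  moreover have "p^Suc n dvd p^n * (t * (1 - 2 * r * u))"
  proof -
    have "p dvd 1 - 2 * r * u" using u by (metis cong_iff_dvd_diff cong_sym)
    then show ?thesis by (simp add: mult_dvd_mono)
  qed
  moreover have "p^Suc n dvd p^(2 * n)" using step(1) by (intro le_imp_power_dvd) simp
  ultimately have "[r'^2 = a] (mod p^Suc n)" by (simp add: cong_iff_dvd_diff)
  moreover have "[r' = z] (mod p)"
  proof -
    have "p dvd t * u * p^n" using step(1) by (simp add: dvd_power)
    then have "[r' = r] (mod p)" by (simp add: r'_def cong_iff_dvd_diff)
    then show ?thesis using rz by (rule cong_trans)
  qed
  ultimately show ?case by blast
qed

lemma square_roots_lifting_residue_class_int:
  fixes p a z :: int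
  assumes "prime p" "odd p" "coprime z p" "[z^2 = a] (mod p)" "e \<ge> 1"
  shows "\<exists>r. \<forall>w. [w = z] (mod p) \<and> [w^2 = a] (mod p^e) \<longleftrightarrow> [w = r] (mod p^e)"
proof -
  obtain r where rz: "[r = z] (mod p)" and ra: "[r^2 = a] (mod p^e)"
    using square_root_lift_exists[OF assms] by blast
  have "[w = z] (mod p) \<and> [w^2 = a] (mod p^e) \<longleftrightarrow> [w = r] (mod p^e)" for w
  proof
    assume "[w = z] (mod p) \<and> [w^2 = a] (mod p^e)"
    moreover from this have "[w^2 = r^2] (mod p^e)" using ra by (metis cong_sym cong_trans)
    ultimately show "[w = r] (mod p^e)"
      using square_root_lift_unique[OF assms(1-3) _ rz] by blast
  next
    assume wr: "[w = r] (mod p^e)"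
    have "p dvd p^e" using assms(5) by (simp add: dvd_power)
    then have "[w = z] (mod p)" using cong_dvd_modulus[OF wr] rz by (metis cong_trans)
    moreover have "[w^2 = a] (mod p^e)" using cong_pow[OF wr] ra by (rule cong_trans)
    ultimately show "[w = z] (mod p) \<and> [w^2 = a] (mod p^e)" ..
  qed
  then show ?thesis by blast
qed

lemma square_roots_lifting_residue_class:
  fixes p a z :: nat
  assumes "prime p" "odd p" "coprime a p" "[z^2 = a] (mod p)" "e \<ge> 1"
  shows "\<exists>r. \<forall>w. [w = z] (mod p) \<and> [w^2 = a] (mod p^e) \<longleftrightarrow> [w = r] (mod p^e)"
proof -
  have "coprime (z^2) p" using cong_imp_coprime[OF cong_sym[OF assms(4)] assms(3)] .
  then have "coprime z p" by simp
  moreover have "[int z^2 = int a] (mod int p)" using assms(4) by (metis cong_int_iff of_nat_power)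
  ultimately obtain r where r: "\<And>w. [w = int z] (mod int p) \<and> [w^2 = int a] (mod int p^e)
      \<longleftrightarrow> [w = r] (mod int p^e)"
    using square_roots_lifting_residue_class_int[of "int p" "int z" "int a" e] assms by auto
  define r0 where "r0 = nat (r mod int p^e)"
  have "[r = int r0] (mod int p^e)"
    using assms(1) by (simp add: r0_def cong_def prime_gt_0_nat)
  then have "[int w = r] (mod int p^e) \<longleftrightarrow> [int w = int r0] (mod int p^e)" for w
    by (meson cong_sym cong_trans)
  then have "[w = z] (mod p) \<and> [w^2 = a] (mod p^e) \<longleftrightarrow> [w = r0] (mod p^e)" for w
    using r[of "int w"] by (simp flip: cong_int_iff)
  then show ?thesis by blast
qed

lemma card_cong_class_less:
  fixes M c r :: nat
  assumes "M > 0"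
  shows "card {w. w < c * M \<and> [w = r] (mod M)} = c"
proof -
  have "{w. w < c * M \<and> [w = r] (mod M)} = (\<lambda>i. r mod M + i * M) ` {..<c}"
  proof (intro Set.set_eqI iffI)
    fix w assume "w \<in> {w. w < c * M \<and> [w = r] (mod M)}"
    then have "w mod M = r mod M" "w < c * M" by (simp_all add: cong_def)
    then have "w = r mod M + (w div M) * M" "w div M < c"
      using assms by (metis mod_div_mult_eq add.commute, simp add: div_less_iff_less_mult)
    then show "w \<in> (\<lambda>i. r mod M + i * M) ` {..<c}" by blast
  next
    fix w assume "w \<in> (\<lambda>i. r mod M + i * M) ` {..<c}"
    then obtain i where "i < c" "w = r mod M + i * M" by blast
    moreover have "r mod M + i * M < (Suc i) * M" using assms by simp
    moreover have "Suc i * M \<le> c * M" using mult_le_mono1[OF Suc_leI[OF \<open>i < c\<close>]] .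
    ultimately show "w \<in> {w. w < c * M \<and> [w = r] (mod M)}" by (auto simp: cong_def)
  qed
  moreover have "inj_on (\<lambda>i. r mod M + i * M) {..<c}" using assms by (auto simp: inj_on_def)
  ultimately show ?thesis by (simp add: card_image)
qed

lemma card_square_roots_above:
  fixes p a z e c :: nat
  assumes "prime p" "odd p" "coprime a p" "[z^2 = a] (mod p)" "e \<ge> 1" "z < p"
  shows "card {w. w < c * p^e \<and> w mod p = z \<and> [w^2 = a] (mod p^e)} = c"
proof -
  obtain r where r: "\<And>w. [w = z] (mod p) \<and> [w^2 = a] (mod p^e) \<longleftrightarrow> [w = r] (mod p^e)"
    using square_roots_lifting_residue_class[OF assms(1-5)] by blast
  have "w mod p = z \<longleftrightarrow> [w = z] (mod p)" for w using assms(6) by (simp add: cong_def)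
  then have "{w. w < c * p^e \<and> w mod p = z \<and> [w^2 = a] (mod p^e)} = {w. w < c * p^e \<and> [w = r] (mod p^e)}"
    using r by blast
  then show ?thesis using card_cong_class_less[of "p^e" c r] assms(1) by (simp add: prime_gt_0_nat)
qed

lemma image_mset_mset_set_by_fibres:
  assumes "finite A" "finite Z" "h ` A \<subseteq> Z" "\<And>z. z \<in> Z \<Longrightarrow> card {x\<in>A. h x = z} = c"
  shows "image_mset (\<lambda>x. G (h x)) (mset_set A) = (\<Sum>z\<in>Z. replicate_mset c (G z))"
proof -
  have const: "(\<Sum>x\<in>B. {#y#}) = replicate_mset (card B) y" if "finite B" for B and y :: 'c
    using that by (induction B rule: finite_induct) auto
  have "image_mset (\<lambda>x. G (h x)) (mset_set A) = (\<Sum>x\<in>A. {#G (h x)#})"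
    by (simp add: sum_unfold_sum_mset)
  also have "\<dots> = (\<Sum>z\<in>Z. \<Sum>x\<in>{x\<in>A. h x = z}. {#G (h x)#})"
    by (rule sum.group[OF assms(1-3), symmetric])
  also have "\<dots> = (\<Sum>z\<in>Z. \<Sum>x\<in>{x\<in>A. h x = z}. {#G z#})"
    by (intro sum.cong) auto
  also have "\<dots> = (\<Sum>z\<in>Z. replicate_mset c (G z))"
    using assms(1,4) by (intro sum.cong) (simp_all add: const)
  finally show ?thesis .
qed

lemma image_mset_square_roots_by_residue:
  fixes p a e c :: nat
  assumes "prime p" "odd p" "coprime a p" "e \<ge> 1"
  shows "image_mset (\<lambda>w. G (w mod p)) (mset_set {w. w < c * p^e \<and> [w^2 = a] (mod p^e)})
    = (\<Sum>z\<in>{z\<in>{1..p-1}. [z^2 = a] (mod p)}. replicate_mset c (G z))"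
proof (rule image_mset_mset_set_by_fibres)
  have "p dvd p^e" using assms(4) by (simp add: dvd_power)
  then have modp: "[w^2 = a] (mod p)" if "[w^2 = a] (mod p^e)" for w
    using that cong_dvd_modulus_nat by blast
  show "(\<lambda>w. w mod p) ` {w. w < c * p^e \<and> [w^2 = a] (mod p^e)} \<subseteq> {z\<in>{1..p-1}. [z^2 = a] (mod p)}"
  proof (rule image_subsetI)
    fix w assume "w \<in> {w. w < c * p^e \<and> [w^2 = a] (mod p^e)}"
    then have wa: "[(w mod p)^2 = a] (mod p)" using modp by (simp add: cong_def power_mod)
    then have "coprime ((w mod p)^2) p" using assms(3) by (metis cong_imp_coprime cong_sym)
    then have "coprime (w mod p) p" by simp
    then have "w mod p \<noteq> 0" using assms(1) by (metis coprime_0_left_iff not_prime_unit)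
    moreover have "w mod p < p" using assms(1) by (simp add: prime_gt_0_nat)
    ultimately show "w mod p \<in> {z\<in>{1..p-1}. [z^2 = a] (mod p)}" using wa by auto
  qed
  fix z assume "z \<in> {z\<in>{1..p-1}. [z^2 = a] (mod p)}"
  then have "z < p" "[z^2 = a] (mod p)" using assms(1) by (auto simp: prime_gt_0_nat)
  then have "card {w. w < c * p^e \<and> w mod p = z \<and> [w^2 = a] (mod p^e)} = c"
    using card_square_roots_above[OF assms(1-3) _ assms(4)] by blast
  then show "card {w \<in> {w. w < c * p^e \<and> [w^2 = a] (mod p^e)}. w mod p = z} = c"
    by (simp add: conj_commute conj_left_commute)
qed simp_all

lemma power_mult_square_mod:
  fixes p w m k :: nat
  assumes "2 * m \<le> k"
  shows "(w * p^m)^2 mod p^k = (w^2 mod p^(k - 2 * m)) * p^(2 * m)"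
proof -
  have "p^k = p^(k - 2 * m) * p^(2 * m)" using assms by (simp flip: power_add)
  moreover have "(w * p^m)^2 = w^2 * p^(2 * m)" by (simp add: power_mult_distrib power_even_eq)
  ultimately show ?thesis by (simp add: mod_mult_mult2)
qed

lemma mult_power_less_power_imp_less:
  fixes p a l k :: nat
  assumes "1 < p" "a \<noteq> 0" "a * p^l < p^k"
  shows "l < k"
proof -
  have "p^l \<le> a * p^l" using assms(2) by simp
  then have "p^l < p^k" using assms(3) by linarith
  then show ?thesis using assms(1) by simp
qed

lemma square_mod_prime_power_eq_iff:
  fixes p a l k y :: nat
  assumes "prime p" "coprime a p" "a * p^l < p^k"
  shows "y < p^k \<and> y^2 mod p^k = a * p^l \<longleftrightarrow>
    even l \<and> (\<exists>w. y = w * p^(l div 2) \<and> w < p^(k - l div 2) \<and> [w^2 = a] (mod p^(k - l)))"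
proof -
  have p0: "p > 0" using assms(1) by (simp add: prime_gt_0_nat)
  have "a \<noteq> 0" using assms(1,2) by (metis coprime_0_left_iff not_prime_unit)
  then have lk: "l < k" using mult_power_less_power_imp_less prime_gt_1_nat[OF assms(1)] assms(3) by blast
  then have pk: "p^k = p^(k - l) * p^l" by (simp flip: power_add)
  then have "a < p^(k - l)" using assms(3) p0 by simp
  show ?thesis
  proof
    assume y: "y < p^k \<and> y^2 mod p^k = a * p^l"
    define j where "j = multiplicity p y"
    have "a * p^l \<noteq> 0" using \<open>a \<noteq> 0\<close> p0 by simp
    then have "y \<noteq> 0" using y by (metis zero_power2 mod_0)
    then obtain w where w: "y = p^j * w" "\<not> p dvd w"
      using multiplicity_decompose'[of y p] assms(1) unfolding j_def by (metis not_prime_unit)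
    define q where "q = y^2 div p^k"
    have "y^2 = p^l * (p^(k - l) * q + a)"
      using y pk div_mult_mod_eq[of "y^2" "p^k"] by (simp add: q_def algebra_simps)
    moreover have "\<not> p dvd p^(k - l) * q + a"
    proof -
      have "\<not> p dvd a" using assms(1,2) by (metis coprime_common_divisor dvd_refl not_prime_unit)
      moreover have "p dvd p^(k - l) * q" using lk by simp
      ultimately show ?thesis by (simp add: dvd_add_right_iff)
    qed
    ultimately have "multiplicity p (y^2) = l" using p0 by (intro multiplicity_decomposeI) auto
    moreover have "multiplicity p (y^2) = 2 * j"
      using \<open>y \<noteq> 0\<close> assms(1) by (simp add: prime_elem_multiplicity_power_distrib j_def)
    ultimately have l: "l = 2 * j" by simp
    have "(w^2 mod p^(k - l)) * p^l = a * p^l"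
      using y w(1) l lk power_mult_square_mod[of j k w p] by (simp add: mult.commute)
    then have "[w^2 = a] (mod p^(k - l))" using p0 \<open>a < p^(k - l)\<close> by (simp add: cong_def)
    moreover have "w < p^(k - j)"
    proof -
      have "p^k = p^(k - j) * p^j" using l lk by (simp flip: power_add)
      then show ?thesis using y w(1) p0 by (simp add: mult.commute)
    qed
    ultimately show "even l \<and> (\<exists>w. y = w * p^(l div 2) \<and> w < p^(k - l div 2) \<and> [w^2 = a] (mod p^(k - l)))"
      using w(1) l by (auto simp: mult.commute)
  next
    assume "even l \<and> (\<exists>w. y = w * p^(l div 2) \<and> w < p^(k - l div 2) \<and> [w^2 = a] (mod p^(k - l)))"
    then obtain m w where l: "l = 2 * m" and y: "y = w * p^m" "w < p^(k - m)" "[w^2 = a] (mod p^(k - l))"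
      by (metis dvd_mult_div_cancel)
    have "y < p^(k - m) * p^m" using y p0 by simp
    then have "y < p^k" using lk l by (simp flip: power_add)
    moreover have "y^2 mod p^k = a * p^l"
      using y(1,3) l lk power_mult_square_mod[of m k w p] \<open>a < p^(k - l)\<close> by (simp add: cong_def)
    ultimately show "y < p^k \<and> y^2 mod p^k = a * p^l" ..
  qed
qed

lemma sqmap_preimage_nil_verts:
  fixes p k a l :: nat
  assumes "prime p" "coprime a p" "a * p^l < p^k" "l \<ge> 1"
  shows "{y \<in> nil_verts p k. sqmap (p^k) y = a * p^l} =
    (if even l then (\<lambda>w. w * p^(l div 2)) ` {w. w < p^(k - l div 2) \<and> [w^2 = a] (mod p^(k - l))}
     else {})"
proof -
  have "p dvd w * p^(l div 2)" if "even l" for w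
  proof -
    have "l div 2 \<noteq> 0" using that assms(4) by auto
    then show ?thesis by (simp add: dvd_power)
  qed
  then show ?thesis
    using square_mod_prime_power_eq_iff[OF assms(1-3)]
    unfolding nil_verts_def sqmap_def by (auto simp del: power_mult_distrib)
qed

declare Tp.simps [simp del]

lemma Tp_odd: "odd l \<Longrightarrow> Tp p a l = Node {#}"
  by (subst Tp.simps) simp

lemma Tp_even:
  assumes "l \<noteq> 0" "even l"
  shows "Tp p a l = Node (\<Sum>z\<in>{z\<in>{1..p-1}. [z^2 = a] (mod p)}. replicate_mset (p^(l div 2)) (Tp p z (l div 2)))"
proof (cases "\<exists>z\<in>{1..p-1}. [z^2 = a] (mod p)")
  case True
  then show ?thesis using assms by (subst Tp.simps) simp
next
  case False
  then have no_roots: "{z\<in>{1..p-1}. [z^2 = a] (mod p)} = {}" by blast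
  show ?thesis unfolding no_roots using False by (subst Tp.simps) simp
qed

lemma in_tree_shape_nil_verts:
  fixes p k a l :: nat
  assumes "prime p" "odd p"
  shows "a * p^l \<in> nil_verts p k \<Longrightarrow> l \<ge> 1 \<Longrightarrow> coprime a p \<Longrightarrow>
    in_tree_shape (nil_verts p k) (sqmap (p^k)) (a * p^l) (Tp p (a mod p) l)"
proof (induction l arbitrary: a rule: less_induct)
  case (less l)
  let ?V = "nil_verts p k" and ?f = "sqmap (p^k)"
  let ?S = "{y \<in> ?V. ?f y = a * p^l}"
  have p0: "p > 0" using assms(1) by (simp add: prime_gt_0_nat)
  have ak: "a * p^l < p^k" using less.prems(1) by (simp add: nil_verts_def)
  have finite_S: "finite ?S" by (simp add: nil_verts_def)
  show ?case
  proof (cases "even l")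
    case False
    then have no_children: "?S = {}"
      using sqmap_preimage_nil_verts[OF assms(1) less.prems(3) ak less.prems(2)] by simp
    have "in_tree_shape ?V ?f (a * p^l) (Node (image_mset (\<lambda>_. Node {#}) (mset_set ?S)))"
      by (rule in_tree_shape.intros[OF finite_S]) (simp add: no_children)
    then show ?thesis unfolding no_children Tp_odd[OF False] by simp
  next
    case True
    define m where "m = l div 2"
    define W where "W = {w. w < p^m * p^(k - l) \<and> [w^2 = a] (mod p^(k - l))}"
    have m: "l = 2 * m" "1 \<le> m" "m < l" using True less.prems(2) by (auto simp: m_def)
    have "a \<noteq> 0" using less.prems(3) assms(1) by (metis coprime_0_left_iff not_prime_unit)
    then have lk: "l < k" using mult_power_less_power_imp_less prime_gt_1_nat[OF assms(1)] ak by blast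
    have "p^m * p^(k - l) = p^(k - m)" using m lk by (simp flip: power_add)
    then have S: "?S = (\<lambda>w. w * p^m) ` W"
      using sqmap_preimage_nil_verts[OF assms(1) less.prems(3) ak less.prems(2)] True
      by (simp add: W_def m_def)
    define g where "g y = Tp p (y div p^m mod p) m" for y
    have children: "in_tree_shape ?V ?f y (g y)" if y: "y \<in> ?S" for y
    proof -
      obtain w where w: "y = w * p^m" "[w^2 = a] (mod p^(k - l))"
        using y unfolding S W_def by blast
      have "coprime a (p^(k - l))" using less.prems(3) by simp
      then have "coprime (w^2) (p^(k - l))" using w(2) by (metis cong_imp_coprime cong_sym)
      then have "coprime w p" using lk by simp
      then show ?thesis using less.IH[OF m(3), of w] y w(1) m(2) p0 by (simp add: g_def)
    qed
    have "image_mset g (mset_set ?S) = image_mset (\<lambda>w. Tp p (w mod p) m) (mset_set W)"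
      using p0 unfolding S by (simp add: image_mset_mset_set[symmetric] inj_on_def multiset.map_comp
          comp_def g_def)
    also have "\<dots> = (\<Sum>z\<in>{z\<in>{1..p-1}. [z^2 = a] (mod p)}. replicate_mset (p^m) (Tp p z m))"
      unfolding W_def using lk by (intro image_mset_square_roots_by_residue[OF assms less.prems(3)]) simp
    also have "\<dots> = (\<Sum>z\<in>{z\<in>{1..p-1}. [z^2 = a mod p] (mod p)}. replicate_mset (p^m) (Tp p z m))"
      by (simp add: cong_def)
    also have "Node \<dots> = Tp p (a mod p) l"
      using Tp_even[of l p "a mod p", folded m_def] m by simp
    finally have "Node (image_mset g (mset_set ?S)) = Tp p (a mod p) l" .
    moreover have "in_tree_shape ?V ?f (a * p^l) (Node (image_mset g (mset_set ?S)))"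
      using children by (intro in_tree_shape.intros[OF finite_S]) blast
    ultimately show ?thesis by simp
  qed
qed

lemma sqmap_funpow: "x < n \<Longrightarrow> (sqmap n ^^ j) x = x^(2^j) mod n"
proof (induction j)
  case (Suc j)
  then show ?case by (simp add: sqmap_def power_mod flip: power_mult) (simp add: mult.commute)
qed simp

lemma nil_verts_power_two_power_mod:
  assumes "x \<in> nil_verts p k" "k \<le> j"
  shows "x^(2^j) mod p^k = 0"
proof -
  have "p^(2^j) dvd x^(2^j)" using assms(1) by (simp add: nil_verts_def dvd_power_same)
  moreover have "k \<le> 2^j" using assms(2) less_exp[of j] by linarith
  then have "p^k dvd p^(2^j)" by (rule le_imp_power_dvd)
  ultimately show ?thesis by (meson dvd_imp_mod_0 dvd_trans)
qed

lemma grounded_tree_nil_verts: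
  assumes "p > 0" "k \<ge> 1"
  shows "grounded_tree (nil_verts p k) (sqmap (p^k)) 0"
  unfolding grounded_tree_def
proof (intro conjI ballI allI impI)
  let ?V = "nil_verts p k" and ?f = "sqmap (p^k)"
  show "finite ?V" "0 \<in> ?V" "?f 0 = 0" using assms(1) by (auto simp: nil_verts_def sqmap_def)
next
  fix x assume "x \<in> nil_verts p k"
  then have "p dvd x^2" "p dvd p^k" using assms(2) by (simp_all add: nil_verts_def power2_eq_square)
  then have "p dvd x^2 mod p^k" by (simp add: dvd_mod)
  then show "sqmap (p^k) x \<in> nil_verts p k" using assms(1) by (simp add: nil_verts_def sqmap_def)
next
  fix x assume x: "x \<in> nil_verts p k"
  have "(sqmap (p^k) ^^ k) x = x^(2^k) mod p^k" using x by (simp add: nil_verts_def sqmap_funpow)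
  also have "\<dots> = 0" using x by (simp add: nil_verts_power_two_power_mod)
  finally have "(sqmap (p^k) ^^ k) x = 0" .
  then show "\<exists>j. (sqmap (p^k) ^^ j) x = 0" ..
next
  fix x j assume x: "x \<in> nil_verts p k" and "0 < j" and cycle: "(sqmap (p^k) ^^ j) x = x"
  have "((sqmap (p^k) ^^ j) ^^ n) x = x" for n using cycle by (induction n) simp_all
  then have "(sqmap (p^k) ^^ (j * k)) x = x" by (simp add: funpow_mult)
  moreover have "(sqmap (p^k) ^^ (j * k)) x = x^(2^(j * k)) mod p^k"
    using x by (simp add: nil_verts_def sqmap_funpow)
  moreover have "x^(2^(j * k)) mod p^k = 0"
    using x \<open>0 < j\<close> by (simp add: nil_verts_power_two_power_mod)
  ultimately show "x = 0" by simp
qed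

lemma card_nil_verts:
  assumes "p > 0" "k \<ge> 1"
  shows "card (nil_verts p k) = p^(k - 1)"
proof -
  have pk: "p^k = p * p^(k - 1)" using assms(2) by (simp flip: power_Suc)
  have "nil_verts p k = (\<lambda>i. p * i) ` {..<p^(k - 1)}"
    using assms(1) unfolding nil_verts_def pk by (auto elim: dvdE)
  moreover have "inj_on (\<lambda>i. p * i) {..<p^(k - 1)}" using assms(1) by (simp add: inj_on_def)
  ultimately show ?thesis by (simp add: card_image)
qed

lemma mult_prime_power_in_nil_verts:
  fixes p k y l :: nat
  assumes "prime p" "coprime y p" "1 \<le> l" "l < k" "y \<le> p^(k - l)"
  shows "y * p^l \<in> nil_verts p k"
proof -
  have "\<not> p dvd y" using assms(1,2) by (metis coprime_common_divisor dvd_refl not_prime_unit)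
  moreover have "p dvd p^(k - l)" using assms(4) by simp
  ultimately have "y \<noteq> p^(k - l)" by blast
  then have "y * p^l < p^(k - l) * p^l" using assms(1,5) by (simp add: prime_gt_0_nat)
  then have "y * p^l < p^k" using assms(4) by (simp flip: power_add)
  moreover have "p dvd y * p^l" using assms(3) by (simp add: dvd_power)
  ultimately show ?thesis by (simp add: nil_verts_def)
qed

lemma nil_verts_sqmap_eq_0:
  fixes p k :: nat
  assumes "prime p" "k \<ge> 1"
  shows "{x \<in> nil_verts p k. x \<noteq> 0 \<and> sqmap (p^k) x = 0}
    = {y * p^l | y l. (k + 1) div 2 \<le> l \<and> l < k \<and> 1 \<le> y \<and> y \<le> p^(k - l) \<and> coprime y p}"
proof (intro Set.set_eqI iffI)
  fix x assume "x \<in> {x \<in> nil_verts p k. x \<noteq> 0 \<and> sqmap (p^k) x = 0}"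
  then have x: "x < p^k" "p dvd x" "x \<noteq> 0" "p^k dvd x^2"
    by (auto simp: nil_verts_def sqmap_def)
  define l where "l = multiplicity p x"
  obtain y where y: "x = p^l * y" "\<not> p dvd y"
    using multiplicity_decompose'[of x p] x(3) assms(1) unfolding l_def by (metis not_prime_unit)
  have "y \<noteq> 0" using x(3) y(1) by auto
  have "coprime y p" using y(2) assms(1) by (simp add: prime_imp_coprime coprime_commute)
  have "l \<noteq> 0" using x(2) y by (metis mult_1 power_0)
  have "l < k"
    using mult_power_less_power_imp_less[OF prime_gt_1_nat[OF assms(1)] \<open>y \<noteq> 0\<close>] x(1) y(1)
    by (simp add: mult.commute)
  then have "y * p^l < p^(k - l) * p^l" using x(1) y(1) by (simp add: mult.commute flip: power_add)
  then have "y \<le> p^(k - l)" by simp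
  have "multiplicity p (x^2) = 2 * l"
    using x(3) assms(1) by (simp add: prime_elem_multiplicity_power_distrib l_def)
  then have "k \<le> 2 * l"
    using x(3,4) assms(1) power_dvd_iff_le_multiplicity[of "x^2" p k] by (metis not_prime_unit power_not_zero)
  then show "x \<in> {y * p^l | y l. (k + 1) div 2 \<le> l \<and> l < k \<and> 1 \<le> y \<and> y \<le> p^(k - l) \<and> coprime y p}"
    using y(1) \<open>y \<noteq> 0\<close> \<open>l < k\<close> \<open>y \<le> p^(k - l)\<close> \<open>coprime y p\<close>
    by (intro CollectI exI[of _ y] exI[of _ l]) (auto simp: mult.commute)
next
  fix x assume "x \<in> {y * p^l | y l. (k + 1) div 2 \<le> l \<and> l < k \<and> 1 \<le> y \<and> y \<le> p^(k - l) \<and> coprime y p}"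
  then obtain y l where x: "x = y * p^l" "(k + 1) div 2 \<le> l" "l < k" "1 \<le> y" "y \<le> p^(k - l)" "coprime y p"
    by blast
  have "x \<in> nil_verts p k"
    using mult_prime_power_in_nil_verts[OF assms(1) x(6) _ x(3,5)] x(1,2) assms(2) by simp
  moreover have "x \<noteq> 0" using x(1,4) assms(1) by (simp add: prime_gt_0_nat)
  moreover have "p^k dvd x^2"
  proof -
    have "p^k dvd p^(2 * l)" using x(2) by (intro le_imp_power_dvd) simp
    then show ?thesis using x(1) by (simp add: power_mult_distrib power_even_eq)
  qed
  ultimately show "x \<in> {x \<in> nil_verts p k. x \<noteq> 0 \<and> sqmap (p^k) x = 0}"
    by (simp add: sqmap_def)
qed

theorem theorem9:
  fixes p k :: nat
  assumes "prime p" and "odd p" and "k \<ge> 1"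
  shows "grounded_tree (nil_verts p k) (sqmap (p^k)) 0
    \<and> card (nil_verts p k) = p^(k-1)
    \<and> {x \<in> nil_verts p k. x \<noteq> 0 \<and> sqmap (p^k) x = 0}
        = {y * p^l | y l. (k + 1) div 2 \<le> l \<and> l < k \<and> 1 \<le> y \<and> y \<le> p^(k-l) \<and> coprime y p}
    \<and> (\<forall>x\<in>nil_verts p k. \<forall>xt l. x \<noteq> 0 \<and> x = xt * p^l \<and> 1 \<le> l \<and> l < k \<and> coprime xt p
          \<longrightarrow> in_tree_shape (nil_verts p k) (sqmap (p^k)) x (Tp p (xt mod p) l))
    \<and> (\<forall>y l. (k + 1) div 2 \<le> l \<and> l < k \<and> 1 \<le> y \<and> y \<le> p^(k-l) \<and> coprime y p
          \<longrightarrow> in_tree_shape (nil_verts p k) (sqmap (p^k)) (y * p^l) (Tp p (y mod p) l))"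
proof -
  have "p > 0" using assms(1) by (simp add: prime_gt_0_nat)
  have in_trees: "\<forall>x\<in>nil_verts p k. \<forall>xt l. x \<noteq> 0 \<and> x = xt * p^l \<and> 1 \<le> l \<and> l < k \<and> coprime xt p
      \<longrightarrow> in_tree_shape (nil_verts p k) (sqmap (p^k)) x (Tp p (xt mod p) l)"
    using in_tree_shape_nil_verts[OF assms(1,2)] by blast
  have "in_tree_shape (nil_verts p k) (sqmap (p^k)) (y * p^l) (Tp p (y mod p) l)"
    if "(k + 1) div 2 \<le> l" "l < k" "y \<le> p^(k-l)" "coprime y p" for y l
  proof -
    have "1 \<le> l" using that(1) assms(3) by simp
    then show ?thesis
      using in_tree_shape_nil_verts[OF assms(1,2)] mult_prime_power_in_nil_verts[OF assms(1)] that
      by blast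
  qed
  then show ?thesis
    using grounded_tree_nil_verts[OF \<open>p > 0\<close> assms(3)] card_nil_verts[OF \<open>p > 0\<close> assms(3)]
      nil_verts_sqmap_eq_0[OF assms(1,3)] in_trees
    by blast
qed

end
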